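(* Let $G=(N,A)$ be an $s$-$t$ DAG (parallel arcs allowed) and let $uv\in A$. Then $uv$ is an $s$-dominator if and only if $d^+_v\ge 1$ and $d^-_v=1$; and $uv$ is a $t$-dominator if and only if $d^-_u\ge 1$ and $d^+_u=1$.
   Context: An $s$-$t$ DAG is a directed acyclic multigraph with a unique source $s$ and a unique sink $t$ such that every node is reachable from $s$ and every node reaches $t$. $d^-_v$ and $d^+_v$ denote the indegree and outdegree of $v$ (counting parallel arcs). An arc $ab$ $s$-dominates an arc $xy$ if $ab=xy$ or every $s$-$x$ path contains $ab$; $ab$ $t$-dominates $xy$ if $ab=xy$ or every $y$-$t$ path contains $ab$. An arc is an $s$-dominator (resp. $t$-dominator) if it $s$-dominates (resp. $t$-dominates) some arc different from itself. *)

theory Defs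
  imports Main
begin

text \<open>A directed multigraph is given by a node set N, an arc set A (arcs are
  abstract identifiers, so parallel arcs are distinct elements of A), and
  tail/head maps. An arc e goes from tail e to head e.\<close>

fun walk :: "'v set \<Rightarrow> 'a set \<Rightarrow> ('a \<Rightarrow> 'v) \<Rightarrow> ('a \<Rightarrow> 'v) \<Rightarrow> 'v \<Rightarrow> 'a list \<Rightarrow> 'v \<Rightarrow> bool" where
  "walk N A tail head x [] y \<longleftrightarrow> x \<in> N \<and> x = y"
| "walk N A tail head x (e # es) y \<longleftrightarrow> e \<in> A \<and> tail e = x \<and> x \<in> N \<and> walk N A tail head (head e) es y"

definition indeg :: "'a set \<Rightarrow> ('a \<Rightarrow> 'v) \<Rightarrow> 'v \<Rightarrow> nat" where
  "indeg A head v = card {e \<in> A. head e = v}"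

definition outdeg :: "'a set \<Rightarrow> ('a \<Rightarrow> 'v) \<Rightarrow> 'v \<Rightarrow> nat" where
  "outdeg A tail v = card {e \<in> A. tail e = v}"

definition st_dag :: "'v set \<Rightarrow> 'a set \<Rightarrow> ('a \<Rightarrow> 'v) \<Rightarrow> ('a \<Rightarrow> 'v) \<Rightarrow> 'v \<Rightarrow> 'v \<Rightarrow> bool" where
  "st_dag N A tail head s t \<longleftrightarrow>
     finite N \<and> finite A \<and> tail ` A \<subseteq> N \<and> head ` A \<subseteq> N \<and>
     (\<forall>x es. walk N A tail head x es x \<longrightarrow> es = []) \<and>
     s \<in> N \<and> t \<in> N \<and>
     {v \<in> N. indeg A head v = 0} = {s} \<and>
     {v \<in> N. outdeg A tail v = 0} = {t} \<and>
     (\<forall>v \<in> N. (\<exists>es. walk N A tail head s es v) \<and> (\<exists>es. walk N A tail head v es t))"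

definition s_dominates :: "'v set \<Rightarrow> 'a set \<Rightarrow> ('a \<Rightarrow> 'v) \<Rightarrow> ('a \<Rightarrow> 'v) \<Rightarrow> 'v \<Rightarrow> 'a \<Rightarrow> 'a \<Rightarrow> bool" where
  "s_dominates N A tail head s e f \<longleftrightarrow>
     e = f \<or> (\<forall>es. walk N A tail head s es (tail f) \<longrightarrow> e \<in> set es)"

definition t_dominates :: "'v set \<Rightarrow> 'a set \<Rightarrow> ('a \<Rightarrow> 'v) \<Rightarrow> ('a \<Rightarrow> 'v) \<Rightarrow> 'v \<Rightarrow> 'a \<Rightarrow> 'a \<Rightarrow> bool" where
  "t_dominates N A tail head t e f \<longleftrightarrow>
     e = f \<or> (\<forall>es. walk N A tail head (head f) es t \<longrightarrow> e \<in> set es)"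

definition s_dominator :: "'v set \<Rightarrow> 'a set \<Rightarrow> ('a \<Rightarrow> 'v) \<Rightarrow> ('a \<Rightarrow> 'v) \<Rightarrow> 'v \<Rightarrow> 'a \<Rightarrow> bool" where
  "s_dominator N A tail head s e \<longleftrightarrow> (\<exists>f \<in> A. f \<noteq> e \<and> s_dominates N A tail head s e f)"

definition t_dominator :: "'v set \<Rightarrow> 'a set \<Rightarrow> ('a \<Rightarrow> 'v) \<Rightarrow> ('a \<Rightarrow> 'v) \<Rightarrow> 'v \<Rightarrow> 'a \<Rightarrow> bool" where
  "t_dominator N A tail head t e \<longleftrightarrow> (\<exists>f \<in> A. f \<noteq> e \<and> t_dominates N A tail head t e f)"

end

theory Submission
  imports Defs
begin

text \<open>Acyclicity is the key: a walk leaving the head v of an arc uv can never use uv again,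
  since that would close a cycle through v. Hence if uv s-dominates some other arc, the
  dominated arc is reached from v, so v has an outgoing arc, and any second arc entering v
  would yield an s-walk avoiding uv. Conversely, if uv is the only arc entering v, every
  nonempty s-walk to v ends with uv, so uv s-dominates any arc leaving v. The statement for
  t-dominators is the same one for the reversed DAG, which swaps s with t and in- with
  out-degrees.\<close>

lemma walk_endpoints_in_nodes: "walk N A tail head x es y \<Longrightarrow> x \<in> N \<and> y \<in> N"
  by (induction es arbitrary: x) auto

lemma walk_append_iff:
  "walk N A tail head x (xs @ ys) z \<longleftrightarrow> (\<exists>y. walk N A tail head x xs y \<and> walk N A tail head y ys z)"
  by (induction xs arbitrary: x) (auto dest: walk_endpoints_in_nodes)

lemma walk_snoc_iff:
  "walk N A tail head x (es @ [g]) y \<longleftrightarrow>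
     walk N A tail head x es (tail g) \<and> g \<in> A \<and> head g = y \<and> y \<in> N"
  by (auto simp: walk_append_iff dest: walk_endpoints_in_nodes)

lemma walk_rev:
  "walk N A tail head x es y \<Longrightarrow> walk N A head tail y (rev es) x"
  by (induction es arbitrary: x) (auto simp: walk_snoc_iff dest: walk_endpoints_in_nodes)

lemma walk_suffix_from_head:
  assumes "walk N A tail head x es z" and "e \<in> set es"
  obtains ys where "walk N A tail head (head e) ys z"
proof -
  obtain xs ys where "es = xs @ e # ys" using split_list[OF assms(2)] by blast
  with assms(1) show ?thesis using that by (auto simp: walk_append_iff)
qed

lemma outdeg_ge_1_if_walk:
  assumes "finite A" and "walk N A tail head x es y" and "es \<noteq> []"
  shows "outdeg A tail x \<ge> 1"
proof -
  obtain g gs where "es = g # gs" using assms(3) by (cases es) auto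
  with assms(2) have "g \<in> {g \<in> A. tail g = x}" by simp
  then have "card {g \<in> A. tail g = x} \<noteq> 0" using assms(1) by auto
  then show ?thesis unfolding outdeg_def by simp
qed

lemma indeg_eq_outdeg: "indeg A f v = outdeg A f v"
  unfolding indeg_def outdeg_def ..

lemma st_dag_closed_walk_Nil:
  "st_dag N A tail head s t \<Longrightarrow> walk N A tail head x es x \<Longrightarrow> es = []"
  unfolding st_dag_def by blast

lemma st_dag_walk_from_source:
  "st_dag N A tail head s t \<Longrightarrow> v \<in> N \<Longrightarrow> \<exists>es. walk N A tail head s es v"
  unfolding st_dag_def by blast

lemma st_dag_tail_in_nodes: "st_dag N A tail head s t \<Longrightarrow> g \<in> A \<Longrightarrow> tail g \<in> N"
  unfolding st_dag_def by blast

lemma st_dag_head_in_nodes: "st_dag N A tail head s t \<Longrightarrow> g \<in> A \<Longrightarrow> head g \<in> N"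
  unfolding st_dag_def by blast

lemma st_dag_indeg_source: "st_dag N A tail head s t \<Longrightarrow> indeg A head s = 0"
  unfolding st_dag_def by blast

lemma st_dag_walk_from_head_avoids:
  assumes dag: "st_dag N A tail head s t" and "e \<in> A"
    and walk: "walk N A tail head (head e) es z"
  shows "e \<notin> set es"
proof
  assume "e \<in> set es"
  then obtain xs ys where "es = xs @ e # ys" by (meson split_list)
  with walk have "walk N A tail head (head e) (xs @ [e]) (head e)"
    using \<open>e \<in> A\<close> by (auto simp: walk_append_iff walk_snoc_iff dest: walk_endpoints_in_nodes)
  then show False using st_dag_closed_walk_Nil[OF dag] by blast
qed

lemma st_dag_reverse:
  assumes dag: "st_dag N A tail head s t"
  shows "st_dag N A head tail t s"
proof -
  have "walk N A head tail x es x \<Longrightarrow> es = []" for x es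
    using st_dag_closed_walk_Nil[OF dag, of x "rev es"] walk_rev[of N A head tail x es x] by simp
  moreover have "(\<exists>es. walk N A head tail t es v) \<and> (\<exists>es. walk N A head tail v es s)"
    if "v \<in> N" for v
    using that dag unfolding st_dag_def by (blast intro: walk_rev)
  ultimately show ?thesis
    using dag unfolding st_dag_def indeg_eq_outdeg by auto
qed

lemma t_dominator_iff_s_dominator_reverse:
  "t_dominator N A tail head t e \<longleftrightarrow> s_dominator N A head tail t e"
proof -
  have "(\<forall>es. walk N A tail head y es t \<longrightarrow> e \<in> set es) \<longleftrightarrow>
        (\<forall>es. walk N A head tail t es y \<longrightarrow> e \<in> set es)" for y
    by (metis rev_rev_ident set_rev walk_rev)
  then show ?thesis
    unfolding t_dominator_def s_dominator_def t_dominates_def s_dominates_def by simp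
qed

lemma s_dominator_imp_degrees:
  assumes dag: "st_dag N A tail head s t" and "e \<in> A"
    and "s_dominator N A tail head s e"
  shows "outdeg A tail (head e) \<ge> 1 \<and> indeg A head (head e) = 1"
proof -
  let ?W = "walk N A tail head"
  obtain f where "f \<in> A" "f \<noteq> e" and dom: "\<And>es. ?W s es (tail f) \<Longrightarrow> e \<in> set es"
    using assms(3) unfolding s_dominator_def s_dominates_def by blast
  obtain p where p: "?W s p (tail f)"
    using st_dag_walk_from_source[OF dag st_dag_tail_in_nodes[OF dag \<open>f \<in> A\<close>]] by blast
  obtain ys where ys: "?W (head e) ys (tail f)"
    using walk_suffix_from_head[OF p dom[OF p]] .
  have finite: "finite A" using dag unfolding st_dag_def by blast
  have "?W (head e) (ys @ [f]) (head f)"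
    using ys \<open>f \<in> A\<close> st_dag_head_in_nodes[OF dag] by (simp add: walk_snoc_iff)
  then have "outdeg A tail (head e) \<ge> 1"
    by (rule outdeg_ge_1_if_walk[OF finite]) simp
  moreover have "{g \<in> A. head g = head e} = {e}"
  proof (rule ccontr)
    assume "{g \<in> A. head g = head e} \<noteq> {e}"
    then obtain g where "g \<in> A" "head g = head e" "g \<noteq> e" using \<open>e \<in> A\<close> by blast
    obtain q where q: "?W s q (tail g)"
      using st_dag_walk_from_source[OF dag st_dag_tail_in_nodes[OF dag \<open>g \<in> A\<close>]] by blast
    \<comment> \<open>Entering head e through g and then following ys avoids e, unless e already lies on q.\<close>
    have "?W s (q @ g # ys) (tail f)"
      using q ys \<open>g \<in> A\<close> \<open>head g = head e\<close> by (auto simp: walk_append_iff dest: walk_endpoints_in_nodes)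
    then have "e \<in> set (q @ g # ys)" by (rule dom)
    then have "e \<in> set q"
      using \<open>g \<noteq> e\<close> st_dag_walk_from_head_avoids[OF dag \<open>e \<in> A\<close> ys] by auto
    then obtain q' where "?W (head e) q' (tail g)"
      using walk_suffix_from_head[OF q] by blast
    then have "?W (head e) (q' @ [g]) (head e)"
      using \<open>g \<in> A\<close> \<open>head g = head e\<close> by (auto simp: walk_snoc_iff dest: walk_endpoints_in_nodes)
    then show False using st_dag_closed_walk_Nil[OF dag] by blast
  qed
  ultimately show ?thesis unfolding indeg_def by simp
qed

lemma degrees_imp_s_dominator:
  assumes dag: "st_dag N A tail head s t" and "e \<in> A"
    and out: "outdeg A tail (head e) \<ge> 1" and "indeg A head (head e) = 1"
  shows "s_dominator N A tail head s e"
proof -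
  let ?W = "walk N A tail head"
  obtain f where "f \<in> A" and tail_f: "tail f = head e"
    using out unfolding outdeg_def by (metis (mono_tags, lifting) card.empty empty_Collect_eq not_one_le_zero)
  have "f \<noteq> e"
  proof
    assume "f = e"
    then have "?W (head e) [e] (head e)"
      using \<open>e \<in> A\<close> tail_f st_dag_head_in_nodes[OF dag] by simp
    then show False using st_dag_closed_walk_Nil[OF dag] by blast
  qed
  have only_e: "g = e" if "g \<in> A" "head g = head e" for g
    using \<open>indeg A head (head e) = 1\<close> \<open>e \<in> A\<close> that unfolding indeg_def
    by (metis (mono_tags, lifting) card_1_singletonE mem_Collect_eq singletonD)
  have "head e \<noteq> s"
    using st_dag_indeg_source[OF dag] \<open>indeg A head (head e) = 1\<close> by auto
  have "e \<in> set es" if "?W s es (tail f)" for es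
  proof (cases es rule: rev_cases)
    case Nil
    then show ?thesis using that tail_f \<open>head e \<noteq> s\<close> by simp
  next
    case (snoc xs g)
    then have "g = e" using that tail_f by (intro only_e) (simp_all add: walk_snoc_iff)
    then show ?thesis using snoc by simp
  qed
  then show ?thesis
    unfolding s_dominator_def s_dominates_def using \<open>f \<in> A\<close> \<open>f \<noteq> e\<close> by blast
qed

lemma s_dominator_iff_degrees:
  assumes "st_dag N A tail head s t" and "e \<in> A"
  shows "s_dominator N A tail head s e \<longleftrightarrow>
           outdeg A tail (head e) \<ge> 1 \<and> indeg A head (head e) = 1"
  using s_dominator_imp_degrees[OF assms] degrees_imp_s_dominator[OF assms] by blast

theorem lemma5:
  fixes N :: "'v set" and A :: "'a set" and tail head :: "'a \<Rightarrow> 'v" and s t :: 'v and e :: 'a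
  assumes "st_dag N A tail head s t"
    and "e \<in> A"
  shows "(s_dominator N A tail head s e \<longleftrightarrow>
            outdeg A tail (head e) \<ge> 1 \<and> indeg A head (head e) = 1)
       \<and> (t_dominator N A tail head t e \<longleftrightarrow>
            indeg A head (tail e) \<ge> 1 \<and> outdeg A tail (tail e) = 1)"
proof
  show "s_dominator N A tail head s e \<longleftrightarrow>
          outdeg A tail (head e) \<ge> 1 \<and> indeg A head (head e) = 1"
    using s_dominator_iff_degrees[OF assms] .
  show "t_dominator N A tail head t e \<longleftrightarrow>
          indeg A head (tail e) \<ge> 1 \<and> outdeg A tail (tail e) = 1"
    using s_dominator_iff_degrees[OF st_dag_reverse[OF assms(1)] assms(2)]
    unfolding t_dominator_iff_s_dominator_reverse indeg_eq_outdeg .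
qed

end
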